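(* Fix $i\in[n]$ such that $m_i=1$. Let $w\in W^i$, $\gamma,\gamma'\in M_i$ with $\gamma'\le\gamma$. Then $w(\gamma')\le w(\gamma)$.
   Context: $\Phi$ is a finite irreducible crystallographic root system with basis $\Pi=\{\alpha_1,\dots,\alpha_n\}$, positive roots $\Phi^+$, highest root $\theta=\sum_i m_i\alpha_i$, Weyl group $W$ with length $\ell$. On the root lattice, $x\le y$ iff $y-x$ is a nonnegative linear combination of positive roots. $M_i=\{\beta\in\Phi^+\mid\beta\ge\alpha_i\}$; $D_r(w)=\{\alpha\in\Pi\mid\ell(ws_\alpha)<\ell(w)\}$; $W^i=\{w\in W\mid D_r(w)\subseteq\{\alpha_i\}\}$. *)

theory Defs
  imports "HOL-Analysis.Analysis"
begin

definition refl :: "'a::euclidean_space \<Rightarrow> 'a \<Rightarrow> 'a" where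
  "refl \<alpha> v = v - (2 * (v \<bullet> \<alpha>) / (\<alpha> \<bullet> \<alpha>)) *\<^sub>R \<alpha>"

definition root_system :: "'a::euclidean_space set \<Rightarrow> bool" where
  "root_system \<Phi> \<longleftrightarrow> finite \<Phi> \<and> 0 \<notin> \<Phi> \<and> span \<Phi> = UNIV \<and>
     (\<forall>\<alpha>\<in>\<Phi>. refl \<alpha> ` \<Phi> \<subseteq> \<Phi>) \<and>
     (\<forall>\<alpha>\<in>\<Phi>. \<forall>c::real. c *\<^sub>R \<alpha> \<in> \<Phi> \<longrightarrow> c = 1 \<or> c = -1)"

definition crystallographic :: "'a::euclidean_space set \<Rightarrow> bool" where
  "crystallographic \<Phi> \<longleftrightarrow> (\<forall>\<alpha>\<in>\<Phi>. \<forall>\<beta>\<in>\<Phi>. 2 * (\<beta> \<bullet> \<alpha>) / (\<alpha> \<bullet> \<alpha>) \<in> \<int>)"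

definition irreducible_rs :: "'a::euclidean_space set \<Rightarrow> bool" where
  "irreducible_rs \<Phi> \<longleftrightarrow> \<not> (\<exists>A B. A \<noteq> {} \<and> B \<noteq> {} \<and> A \<union> B = \<Phi> \<and> A \<inter> B = {} \<and>
       (\<forall>a\<in>A. \<forall>b\<in>B. a \<bullet> b = 0))"

definition is_base :: "'a::euclidean_space set \<Rightarrow> 'a set \<Rightarrow> bool" where
  "is_base \<Phi> \<Delta> \<longleftrightarrow> \<Delta> \<subseteq> \<Phi> \<and> independent \<Delta> \<and>
     (\<forall>\<beta>\<in>\<Phi>. \<exists>c. (\<forall>\<alpha>\<in>\<Delta>. c \<alpha> \<in> \<int>) \<and> \<beta> = (\<Sum>\<alpha>\<in>\<Delta>. c \<alpha> *\<^sub>R \<alpha>) \<and>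
        ((\<forall>\<alpha>\<in>\<Delta>. c \<alpha> \<ge> 0) \<or> (\<forall>\<alpha>\<in>\<Delta>. c \<alpha> \<le> 0)))"

definition pos_roots :: "'a::euclidean_space set \<Rightarrow> 'a set \<Rightarrow> 'a set" where
  "pos_roots \<Phi> \<Delta> = {\<beta>\<in>\<Phi>. \<exists>c. (\<forall>\<alpha>\<in>\<Delta>. c \<alpha> \<ge> 0) \<and> \<beta> = (\<Sum>\<alpha>\<in>\<Delta>. c \<alpha> *\<^sub>R \<alpha>)}"

definition root_le :: "'a::euclidean_space set \<Rightarrow> 'a set \<Rightarrow> 'a \<Rightarrow> 'a \<Rightarrow> bool" where
  "root_le \<Phi> \<Delta> x y \<longleftrightarrow>
     (\<exists>c. (\<forall>\<beta>\<in>pos_roots \<Phi> \<Delta>. c \<beta> \<ge> 0) \<and> y - x = (\<Sum>\<beta>\<in>pos_roots \<Phi> \<Delta>. c \<beta> *\<^sub>R \<beta>))"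

definition highest_root :: "'a::euclidean_space set \<Rightarrow> 'a set \<Rightarrow> 'a \<Rightarrow> bool" where
  "highest_root \<Phi> \<Delta> \<theta> \<longleftrightarrow> \<theta> \<in> pos_roots \<Phi> \<Delta> \<and> (\<forall>\<beta>\<in>\<Phi>. root_le \<Phi> \<Delta> \<beta> \<theta>)"

inductive_set weyl_group :: "'a::euclidean_space set \<Rightarrow> ('a \<Rightarrow> 'a) set" for \<Phi> where
  id_in: "id \<in> weyl_group \<Phi>"
| refl_comp: "w \<in> weyl_group \<Phi> \<Longrightarrow> \<alpha> \<in> \<Phi> \<Longrightarrow> refl \<alpha> \<circ> w \<in> weyl_group \<Phi>"

definition word_map :: "'a::euclidean_space list \<Rightarrow> 'a \<Rightarrow> 'a" where
  "word_map ws = foldr (\<lambda>\<alpha> f. refl \<alpha> \<circ> f) ws id"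

definition weyl_length :: "'a::euclidean_space set \<Rightarrow> ('a \<Rightarrow> 'a) \<Rightarrow> nat" where
  "weyl_length \<Delta> w = (LEAST k. \<exists>ws. set ws \<subseteq> \<Delta> \<and> length ws = k \<and> w = word_map ws)"

definition right_descents :: "'a::euclidean_space set \<Rightarrow> ('a \<Rightarrow> 'a) \<Rightarrow> 'a set" where
  "right_descents \<Delta> w = {\<alpha>\<in>\<Delta>. weyl_length \<Delta> (w \<circ> refl \<alpha>) < weyl_length \<Delta> w}"

definition min_coset_reps :: "'a::euclidean_space set \<Rightarrow> 'a set \<Rightarrow> 'a \<Rightarrow> ('a \<Rightarrow> 'a) set" where
  "min_coset_reps \<Phi> \<Delta> \<alpha>i = {w \<in> weyl_group \<Phi>. right_descents \<Delta> w \<subseteq> {\<alpha>i}}"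

definition M_set :: "'a::euclidean_space set \<Rightarrow> 'a set \<Rightarrow> 'a \<Rightarrow> 'a set" where
  "M_set \<Phi> \<Delta> \<alpha>i = {\<beta>\<in>pos_roots \<Phi> \<Delta>. root_le \<Phi> \<Delta> \<alpha>i \<beta>}"

end

theory Submission
  imports Defs
begin

text \<open>Every \<open>\<gamma> \<in> M\<^sub>i\<close> lies between \<open>\<alpha>\<^sub>i\<close> and \<open>\<theta>\<close>, so \<open>m\<^sub>i = 1\<close> forces its \<open>\<alpha>\<^sub>i\<close>-coordinate
  to be 1; hence \<open>\<gamma> - \<gamma>'\<close> is a nonnegative combination of simple roots other than \<open>\<alpha>\<^sub>i\<close>.
  If \<open>w(\<alpha>) < 0\<close> for a simple root \<open>\<alpha>\<close>, a reduced word for \<open>w\<close> can be shortened after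
  appending \<open>s\<^sub>\<alpha>\<close>, so \<open>\<alpha>\<close> is a right descent; a minimal coset representative \<open>w \<in> W\<^sup>i\<close>
  therefore sends every simple root other than \<open>\<alpha>\<^sub>i\<close> to a positive root, and by linearity
  \<open>w(\<gamma>) - w(\<gamma>') = w(\<gamma> - \<gamma>') \<ge> 0\<close>.\<close>

lemma orthogonal_transformation_refl: "orthogonal_transformation (refl a)"
proof -
  have "linear (refl a)"
    by (rule linearI) (auto simp: refl_def inner_add_left algebra_simps add_divide_distrib)
  moreover have "refl a x \<bullet> refl a y = x \<bullet> y" for x y
    by (cases "a = 0") (simp_all add: refl_def inner_diff_left inner_diff_right inner_commute field_simps)
  ultimately show ?thesis
    by (simp add: orthogonal_transformation_def)
qed

lemma refl_refl [simp]: "refl a (refl a x) = x"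
  by (cases "a = 0") (simp_all add: refl_def inner_diff_left algebra_simps field_simps)

lemma refl_uminus: "refl (- a) = refl a"
  by (rule ext) (simp add: refl_def)

lemma refl_self: "a \<noteq> 0 \<Longrightarrow> refl a a = - a"
  by (simp add: refl_def scaleR_2)

lemma refl_orthogonal_transformation_conj:
  assumes "orthogonal_transformation u"
  shows "refl (u a) (u v) = u (refl a v)"
  using assms by (simp add: refl_def orthogonal_transformation_def linear_diff linear_scale)

lemma word_map_Nil [simp]: "word_map [] = id"
  by (simp add: word_map_def)

lemma word_map_Cons [simp]: "word_map (a # ws) = refl a \<circ> word_map ws"
  by (simp add: word_map_def)

lemma word_map_append: "word_map (xs @ ys) = word_map xs \<circ> word_map ys"
  by (induction xs) auto

lemma orthogonal_transformation_word_map: "orthogonal_transformation (word_map ws)"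
proof (induction ws)
  case (Cons a ws)
  then show ?case
    by (simp only: word_map_Cons orthogonal_transformation_compose orthogonal_transformation_refl)
qed (simp add: id_def)

locale based_root_system =
  fixes \<Phi> \<Delta> :: "'a::euclidean_space set"
  assumes root_system: "root_system \<Phi>" and base: "is_base \<Phi> \<Delta>"
begin

lemma finite_roots: "finite \<Phi>"
  and zero_not_root: "0 \<notin> \<Phi>"
  and refl_root: "\<alpha> \<in> \<Phi> \<Longrightarrow> \<beta> \<in> \<Phi> \<Longrightarrow> refl \<alpha> \<beta> \<in> \<Phi>"
  and root_multiple: "\<alpha> \<in> \<Phi> \<Longrightarrow> c *\<^sub>R \<alpha> \<in> \<Phi> \<Longrightarrow> c = 1 \<or> c = -1"
  and span_roots: "span \<Phi> = UNIV"
  using root_system unfolding root_system_def by (meson image_subset_iff)+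

lemma simple_roots_subset: "\<Delta> \<subseteq> \<Phi>"
  and independent_simple_roots: "independent \<Delta>"
  using base unfolding is_base_def by simp_all

lemma finite_simple_roots: "finite \<Delta>"
  using simple_roots_subset finite_roots finite_subset by blast

lemma simple_root_nonzero: "\<alpha> \<in> \<Delta> \<Longrightarrow> \<alpha> \<noteq> 0"
  using simple_roots_subset zero_not_root by blast

lemma span_simple_roots: "span \<Delta> = UNIV"
proof -
  have "\<Phi> \<subseteq> span \<Delta>"
  proof
    fix \<beta> assume "\<beta> \<in> \<Phi>"
    then obtain c where "\<beta> = (\<Sum>\<alpha>\<in>\<Delta>. c \<alpha> *\<^sub>R \<alpha>)"
      using base unfolding is_base_def by blast
    then show "\<beta> \<in> span \<Delta>"
      by (simp add: span_sum span_scale span_base)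
  qed
  then show ?thesis
    using span_roots span_minimal[of \<Phi> "span \<Delta>"] by auto
qed

abbreviation coeff :: "'a \<Rightarrow> 'a \<Rightarrow> real" where
  "coeff v \<equiv> representation \<Delta> v"

lemma sum_coeff: "(\<Sum>\<alpha>\<in>\<Delta>. coeff v \<alpha> *\<^sub>R \<alpha>) = v"
  by (simp add: sum_representation_eq independent_simple_roots span_simple_roots finite_simple_roots)

lemma coeff_diff: "coeff (x - y) \<alpha> = coeff x \<alpha> - coeff y \<alpha>"
  by (simp add: representation_diff independent_simple_roots span_simple_roots)

lemma coeff_minus: "coeff (- x) \<alpha> = - coeff x \<alpha>"
  by (simp add: representation_neg independent_simple_roots span_simple_roots)

lemma coeff_scaleR: "coeff (c *\<^sub>R x) \<alpha> = c * coeff x \<alpha>"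
  by (simp add: representation_scale independent_simple_roots span_simple_roots)

lemma coeff_sum: "coeff (\<Sum>i\<in>I. f i) \<alpha> = (\<Sum>i\<in>I. coeff (f i) \<alpha>)"
  by (simp add: representation_sum independent_simple_roots span_simple_roots)

lemma coeff_simple: "\<beta> \<in> \<Delta> \<Longrightarrow> coeff \<beta> \<alpha> = (if \<alpha> = \<beta> then 1 else 0)"
  by (simp add: representation_basis independent_simple_roots)

lemma coeff_lincomb: "\<alpha> \<in> \<Delta> \<Longrightarrow> coeff (\<Sum>\<beta>\<in>\<Delta>. c \<beta> *\<^sub>R \<beta>) \<alpha> = c \<alpha>"
  by (simp add: coeff_sum coeff_scaleR coeff_simple finite_simple_roots if_distrib cong: if_cong)

definition nonneg_comb :: "'a \<Rightarrow> bool" where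
  "nonneg_comb v \<longleftrightarrow> (\<forall>\<alpha>\<in>\<Delta>. 0 \<le> coeff v \<alpha>)"

lemma nonneg_comb_simple: "\<alpha> \<in> \<Delta> \<Longrightarrow> nonneg_comb \<alpha>"
  by (simp add: nonneg_comb_def coeff_simple)

lemma nonneg_comb_scaleR: "0 \<le> c \<Longrightarrow> nonneg_comb v \<Longrightarrow> nonneg_comb (c *\<^sub>R v)"
  by (simp add: nonneg_comb_def coeff_scaleR)

lemma nonneg_comb_sum: "(\<And>i. i \<in> I \<Longrightarrow> nonneg_comb (f i)) \<Longrightarrow> nonneg_comb (\<Sum>i\<in>I. f i)"
  by (simp add: nonneg_comb_def coeff_sum sum_nonneg)

lemma root_coeff_Ints: "\<beta> \<in> \<Phi> \<Longrightarrow> \<alpha> \<in> \<Delta> \<Longrightarrow> coeff \<beta> \<alpha> \<in> \<int>"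
  and root_nonneg_comb_cases: "\<beta> \<in> \<Phi> \<Longrightarrow> nonneg_comb \<beta> \<or> nonneg_comb (- \<beta>)"
proof -
  assume "\<beta> \<in> \<Phi>"
  then obtain c where c: "\<forall>\<alpha>\<in>\<Delta>. c \<alpha> \<in> \<int>" "\<beta> = (\<Sum>\<alpha>\<in>\<Delta>. c \<alpha> *\<^sub>R \<alpha>)"
    "(\<forall>\<alpha>\<in>\<Delta>. c \<alpha> \<ge> 0) \<or> (\<forall>\<alpha>\<in>\<Delta>. c \<alpha> \<le> 0)"
    using base unfolding is_base_def by blast
  have coeff_\<beta>: "\<alpha> \<in> \<Delta> \<Longrightarrow> coeff \<beta> \<alpha> = c \<alpha>" for \<alpha>
    using c(2) by (simp add: coeff_lincomb)
  then show "nonneg_comb \<beta> \<or> nonneg_comb (- \<beta>)"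
    using c(3) by (auto simp: nonneg_comb_def coeff_minus)
  show "\<alpha> \<in> \<Delta> \<Longrightarrow> coeff \<beta> \<alpha> \<in> \<int>"
    using c(1) coeff_\<beta> by simp
qed

lemma root_not_nonneg_comb_both: "\<beta> \<in> \<Phi> \<Longrightarrow> nonneg_comb \<beta> \<Longrightarrow> \<not> nonneg_comb (- \<beta>)"
proof
  assume "\<beta> \<in> \<Phi>" "nonneg_comb \<beta>" "nonneg_comb (- \<beta>)"
  then have "\<forall>\<alpha>\<in>\<Delta>. coeff \<beta> \<alpha> = 0"
    by (fastforce simp: nonneg_comb_def coeff_minus)
  then have "\<beta> = 0"
    using sum_coeff[of \<beta>] by simp
  with \<open>\<beta> \<in> \<Phi>\<close> show False
    using zero_not_root by simp
qed

lemma pos_roots_eq: "pos_roots \<Phi> \<Delta> = {\<beta>\<in>\<Phi>. nonneg_comb \<beta>}"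
proof -
  have "(\<exists>c. (\<forall>\<alpha>\<in>\<Delta>. c \<alpha> \<ge> 0) \<and> \<beta> = (\<Sum>\<alpha>\<in>\<Delta>. c \<alpha> *\<^sub>R \<alpha>)) \<longleftrightarrow> nonneg_comb \<beta>" for \<beta>
    using sum_coeff[of \<beta>] by (auto simp: nonneg_comb_def coeff_lincomb)
  then show ?thesis
    unfolding pos_roots_def by auto
qed

lemma root_le_iff: "root_le \<Phi> \<Delta> x y \<longleftrightarrow> nonneg_comb (y - x)"
proof
  assume "root_le \<Phi> \<Delta> x y"
  then obtain c where "\<forall>\<beta>\<in>pos_roots \<Phi> \<Delta>. c \<beta> \<ge> 0" "y - x = (\<Sum>\<beta>\<in>pos_roots \<Phi> \<Delta>. c \<beta> *\<^sub>R \<beta>)"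
    unfolding root_le_def by blast
  then show "nonneg_comb (y - x)"
    by (auto simp: pos_roots_eq intro!: nonneg_comb_sum nonneg_comb_scaleR)
next
  assume nonneg: "nonneg_comb (y - x)"
  have "\<Delta> \<subseteq> pos_roots \<Phi> \<Delta>"
    using simple_roots_subset nonneg_comb_simple by (auto simp: pos_roots_eq)
  moreover have "finite (pos_roots \<Phi> \<Delta>)"
    using finite_roots by (simp add: pos_roots_eq)
  ultimately have "(\<Sum>\<beta>\<in>pos_roots \<Phi> \<Delta>. (if \<beta> \<in> \<Delta> then coeff (y - x) \<beta> else 0) *\<^sub>R \<beta>)
      = (\<Sum>\<beta>\<in>\<Delta>. coeff (y - x) \<beta> *\<^sub>R \<beta>)"
    by (intro sum.mono_neutral_cong_right) auto
  then show "root_le \<Phi> \<Delta> x y"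
    unfolding root_le_def sum_coeff using nonneg
    by (intro exI[of _ "\<lambda>\<beta>. if \<beta> \<in> \<Delta> then coeff (y - x) \<beta> else 0"]) (auto simp: nonneg_comb_def)
qed

lemma word_map_root: "set ws \<subseteq> \<Delta> \<Longrightarrow> \<beta> \<in> \<Phi> \<Longrightarrow> word_map ws \<beta> \<in> \<Phi>"
  by (induction ws) (use simple_roots_subset refl_root in auto)

lemma coeff_refl: "coeff (refl a \<beta>) \<gamma> = coeff \<beta> \<gamma> - (2 * (\<beta> \<bullet> a) / (a \<bullet> a)) * coeff a \<gamma>"
  by (simp add: refl_def coeff_diff coeff_scaleR)

text \<open>A positive root other than \<open>a\<close> has a positive coefficient at some simple root
  \<open>\<gamma> \<noteq> a\<close>, and \<open>s\<^sub>a\<close> does not change that coefficient.\<close>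
lemma refl_simple_nonneg_comb:
  assumes a: "a \<in> \<Delta>" and \<beta>: "\<beta> \<in> \<Phi>" "nonneg_comb \<beta>" "\<beta> \<noteq> a"
  shows "nonneg_comb (refl a \<beta>)"
proof -
  have "\<exists>\<gamma>\<in>\<Delta>. \<gamma> \<noteq> a \<and> coeff \<beta> \<gamma> \<noteq> 0"
  proof (rule ccontr)
    assume "\<not> ?thesis"
    then have "(\<Sum>\<alpha>\<in>\<Delta>. coeff \<beta> \<alpha> *\<^sub>R \<alpha>) = (\<Sum>\<alpha>\<in>\<Delta>. if \<alpha> = a then coeff \<beta> a *\<^sub>R a else 0)"
      by (intro sum.cong) auto
    then have \<beta>_eq: "\<beta> = coeff \<beta> a *\<^sub>R a"
      using a finite_simple_roots by (simp add: sum_coeff)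
    then have "coeff \<beta> a = 1 \<or> coeff \<beta> a = -1"
      using root_multiple[of a "coeff \<beta> a"] a simple_roots_subset \<beta>(1) by auto
    moreover have "coeff \<beta> a \<ge> 0"
      using \<beta>(2) a by (simp add: nonneg_comb_def)
    ultimately show False
      using \<beta>_eq \<beta>(3) by auto
  qed
  then obtain \<gamma> where \<gamma>: "\<gamma> \<in> \<Delta>" "\<gamma> \<noteq> a" "coeff \<beta> \<gamma> > 0"
    using \<beta>(2) by (force simp: nonneg_comb_def less_le)
  then have "coeff (refl a \<beta>) \<gamma> > 0"
    using a by (simp add: coeff_refl coeff_simple)
  moreover have "refl a \<beta> \<in> \<Phi>"
    using refl_root a simple_roots_subset \<beta>(1) by auto
  ultimately show ?thesis
    using root_nonneg_comb_cases \<gamma>(1) by (force simp: nonneg_comb_def coeff_minus)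
qed

text \<open>Reading the word from the right, let \<open>s\<^sub>a\<close> be the letter at which the image of \<open>\<alpha>\<close>
  turns negative. Since \<open>s\<^sub>a\<close> permutes the positive roots other than \<open>a\<close>, the image before
  that letter is \<open>a\<close> itself, so \<open>s\<^sub>a\<close> and the appended \<open>s\<^sub>\<alpha>\<close> cancel.\<close>
lemma word_map_comp_refl_shorter:
  assumes "set ws \<subseteq> \<Delta>" "\<alpha> \<in> \<Delta>" "nonneg_comb (- word_map ws \<alpha>)"
  shows "\<exists>ws'. set ws' \<subseteq> \<Delta> \<and> length ws' < length ws \<and> word_map ws \<circ> refl \<alpha> = word_map ws'"
  using assms
proof (induction ws)
  case Nil
  then show ?case
    using root_not_nonneg_comb_both nonneg_comb_simple simple_roots_subset by auto
next
  case (Cons a ws)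
  let ?u = "word_map ws"
  have ws: "set ws \<subseteq> \<Delta>" and a: "a \<in> \<Delta>"
    using Cons.prems by auto
  have u\<alpha>: "?u \<alpha> \<in> \<Phi>"
    using word_map_root[OF ws] Cons.prems simple_roots_subset by auto
  show ?case
  proof (cases "nonneg_comb (- ?u \<alpha>)")
    case True
    then obtain ws' where ws': "set ws' \<subseteq> \<Delta>" "length ws' < length ws" "?u \<circ> refl \<alpha> = word_map ws'"
      using Cons.IH ws Cons.prems(2) by blast
    then have "word_map (a # ws) \<circ> refl \<alpha> = word_map (a # ws')"
      by (metis comp_assoc word_map_Cons)
    then show ?thesis
      using ws' a by (intro exI[of _ "a # ws'"]) (simp del: word_map_Cons)
  next
    case False
    then have "nonneg_comb (?u \<alpha>)"
      using root_nonneg_comb_cases[OF u\<alpha>] by blast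
    have "?u \<alpha> = a"
    proof (rule ccontr)
      assume "?u \<alpha> \<noteq> a"
      then have "nonneg_comb (refl a (?u \<alpha>))"
        using refl_simple_nonneg_comb[OF a u\<alpha> \<open>nonneg_comb (?u \<alpha>)\<close>] by blast
      moreover have "refl a (?u \<alpha>) \<in> \<Phi>"
        using refl_root a simple_roots_subset u\<alpha> by auto
      ultimately show False
        using Cons.prems(3) root_not_nonneg_comb_both by auto
    qed
    then have "word_map (a # ws) \<circ> refl \<alpha> = ?u"
      using refl_orthogonal_transformation_conj[OF orthogonal_transformation_word_map, of ws \<alpha>]
      by (auto simp: fun_eq_iff)
    then show ?thesis
      using ws by (intro exI[of _ ws]) (simp del: word_map_Cons)
  qed
qed

definition height :: "'a \<Rightarrow> real" where
  "height \<beta> = (\<Sum>\<alpha>\<in>\<Delta>. coeff \<beta> \<alpha>)"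

lemma height_refl_simple:
  assumes "\<alpha> \<in> \<Delta>"
  shows "height (refl \<alpha> \<beta>) = height \<beta> - 2 * (\<beta> \<bullet> \<alpha>) / (\<alpha> \<bullet> \<alpha>)"
proof -
  have "height (refl \<alpha> \<beta>) = height \<beta> - 2 * (\<beta> \<bullet> \<alpha>) / (\<alpha> \<bullet> \<alpha>) * (\<Sum>\<gamma>\<in>\<Delta>. coeff \<alpha> \<gamma>)"
    by (simp only: height_def coeff_refl sum_subtractf sum_distrib_left)
  also have "(\<Sum>\<gamma>\<in>\<Delta>. coeff \<alpha> \<gamma>) = 1"
    using assms finite_simple_roots by (simp add: coeff_simple)
  finally show ?thesis
    by simp
qed

lemma nonneg_comb_inner_simple_pos:
  assumes "nonneg_comb \<beta>" "\<beta> \<noteq> 0"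
  shows "\<exists>\<alpha>\<in>\<Delta>. 0 < \<beta> \<bullet> \<alpha>"
proof (rule ccontr)
  assume "\<not> ?thesis"
  then have "\<beta> \<bullet> (\<Sum>\<alpha>\<in>\<Delta>. coeff \<beta> \<alpha> *\<^sub>R \<alpha>) \<le> 0"
    using assms(1) by (auto simp: inner_sum_right nonneg_comb_def not_less
                            intro!: sum_nonpos mult_nonneg_nonpos)
  with assms(2) show False
    by (simp add: sum_coeff flip: not_less)
qed

text \<open>Every positive root that is not simple is \<open>s\<^sub>\<alpha>\<close> of a positive root of smaller height;
  the height drops by the Cartan integer \<open>2 (\<beta>, \<alpha>) / (\<alpha>, \<alpha>)\<close>, which is integral because
  root coordinates are.\<close>
lemma refl_simple_lowers_height:
  assumes \<beta>: "\<beta> \<in> \<Phi>" "nonneg_comb \<beta>" "\<beta> \<notin> \<Delta>"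
  obtains \<alpha> where "\<alpha> \<in> \<Delta>" "refl \<alpha> \<beta> \<in> \<Phi>" "nonneg_comb (refl \<alpha> \<beta>)"
    "height (refl \<alpha> \<beta>) \<le> height \<beta> - 1"
proof -
  obtain \<alpha> where \<alpha>: "\<alpha> \<in> \<Delta>" "0 < \<beta> \<bullet> \<alpha>"
    using nonneg_comb_inner_simple_pos \<beta>(1,2) zero_not_root by blast
  define k where "k = 2 * (\<beta> \<bullet> \<alpha>) / (\<alpha> \<bullet> \<alpha>)"
  have "k > 0"
    using \<alpha> simple_root_nonzero by (simp add: k_def)
  have root: "refl \<alpha> \<beta> \<in> \<Phi>"
    using refl_root \<alpha>(1) simple_roots_subset \<beta>(1) by auto
  have "k = coeff \<beta> \<alpha> - coeff (refl \<alpha> \<beta>) \<alpha>"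
    using \<alpha>(1) by (simp add: coeff_refl coeff_simple k_def)
  then have "k \<in> \<int>"
    using root_coeff_Ints[OF \<beta>(1) \<alpha>(1)] root_coeff_Ints[OF root \<alpha>(1)] by simp
  with \<open>k > 0\<close> have "k \<ge> 1"
    by (auto elim!: Ints_cases)
  moreover have "height (refl \<alpha> \<beta>) = height \<beta> - k"
    using \<alpha>(1) by (simp add: height_refl_simple k_def)
  ultimately show ?thesis
    using that \<alpha>(1) root refl_simple_nonneg_comb \<beta> by (metis diff_left_mono)
qed

lemma refl_root_word_of_nonneg:
  "\<beta> \<in> \<Phi> \<Longrightarrow> nonneg_comb \<beta> \<Longrightarrow> height \<beta> \<le> real n \<Longrightarrow> \<exists>ws. set ws \<subseteq> \<Delta> \<and> refl \<beta> = word_map ws"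
proof (induction n arbitrary: \<beta>)
  case 0
  then have "\<forall>\<alpha>\<in>\<Delta>. coeff \<beta> \<alpha> = 0"
    using sum_nonneg_eq_0_iff[OF finite_simple_roots, of "coeff \<beta>"] sum_nonneg[of \<Delta> "coeff \<beta>"]
    by (simp add: height_def nonneg_comb_def)
  then have "\<beta> = 0"
    using sum_coeff[of \<beta>] by simp
  with 0 show ?case
    using zero_not_root by simp
next
  case (Suc n)
  show ?case
  proof (cases "\<beta> \<in> \<Delta>")
    case True
    then show ?thesis
      by (intro exI[of _ "[\<beta>]"]) auto
  next
    case False
    then obtain \<alpha> where \<alpha>: "\<alpha> \<in> \<Delta>" "refl \<alpha> \<beta> \<in> \<Phi>" "nonneg_comb (refl \<alpha> \<beta>)"
      "height (refl \<alpha> \<beta>) \<le> height \<beta> - 1"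
      using refl_simple_lowers_height Suc.prems by blast
    then obtain vs where vs: "set vs \<subseteq> \<Delta>" "refl (refl \<alpha> \<beta>) = word_map vs"
      using Suc.IH Suc.prems(3) by fastforce
    have "refl \<beta> x = refl \<alpha> (refl (refl \<alpha> \<beta>) (refl \<alpha> x))" for x
      using refl_orthogonal_transformation_conj[OF orthogonal_transformation_refl,
          of \<alpha> "refl \<alpha> \<beta>" "refl \<alpha> x"]
      by simp
    then show ?thesis
      using vs \<alpha>(1) by (intro exI[of _ "[\<alpha>] @ vs @ [\<alpha>]"]) (auto simp: word_map_append)
  qed
qed

lemma refl_root_word:
  assumes "\<beta> \<in> \<Phi>"
  obtains ws where "set ws \<subseteq> \<Delta>" "refl \<beta> = word_map ws"
proof -
  have "\<beta> \<noteq> 0"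
    using assms zero_not_root by blast
  then have "- \<beta> \<in> \<Phi>"
    using refl_root[OF assms assms] by (simp add: refl_self)
  obtain n :: nat where "height \<beta> \<le> real n" "height (- \<beta>) \<le> real n"
    using real_arch_simple[of "max (height \<beta>) (height (- \<beta>))"] by auto
  then have "\<exists>ws. set ws \<subseteq> \<Delta> \<and> (refl \<beta> = word_map ws \<or> refl (- \<beta>) = word_map ws)"
    using root_nonneg_comb_cases[OF assms] refl_root_word_of_nonneg assms \<open>- \<beta> \<in> \<Phi>\<close> by blast
  then show ?thesis
    using that by (auto simp: refl_uminus)
qed

lemma weyl_group_word: "w \<in> weyl_group \<Phi> \<Longrightarrow> \<exists>ws. set ws \<subseteq> \<Delta> \<and> w = word_map ws"
proof (induction rule: weyl_group.induct)
  case id_in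
  then show ?case
    by (intro exI[of _ "[]"]) simp
next
  case (refl_comp w \<alpha>)
  then obtain ws vs where "set ws \<subseteq> \<Delta>" "w = word_map ws" "set vs \<subseteq> \<Delta>" "refl \<alpha> = word_map vs"
    using refl_root_word by metis
  then show ?case
    by (intro exI[of _ "vs @ ws"]) (simp add: word_map_append)
qed

lemma weyl_length_le: "set ws \<subseteq> \<Delta> \<Longrightarrow> weyl_length \<Delta> (word_map ws) \<le> length ws"
  unfolding weyl_length_def by (rule Least_le) blast

lemma reduced_word_exists:
  assumes "w \<in> weyl_group \<Phi>"
  obtains ws where "set ws \<subseteq> \<Delta>" "length ws = weyl_length \<Delta> w" "w = word_map ws"
proof -
  have "\<exists>k ws. set ws \<subseteq> \<Delta> \<and> length ws = k \<and> w = word_map ws"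
    using weyl_group_word[OF assms] by blast
  then show ?thesis
    using that LeastI_ex[where P = "\<lambda>k. \<exists>ws. set ws \<subseteq> \<Delta> \<and> length ws = k \<and> w = word_map ws"]
    unfolding weyl_length_def by blast
qed

lemma nonneg_comb_simple_not_right_descent:
  assumes "w \<in> weyl_group \<Phi>" "\<alpha> \<in> \<Delta>" "\<alpha> \<notin> right_descents \<Delta> w"
  shows "nonneg_comb (w \<alpha>)"
proof (rule ccontr)
  assume "\<not> nonneg_comb (w \<alpha>)"
  obtain ws where ws: "set ws \<subseteq> \<Delta>" "length ws = weyl_length \<Delta> w" "w = word_map ws"
    using reduced_word_exists[OF assms(1)] .
  have "w \<alpha> \<in> \<Phi>"
    using word_map_root[OF ws(1)] ws(3) assms(2) simple_roots_subset by auto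
  with \<open>\<not> nonneg_comb (w \<alpha>)\<close> have "nonneg_comb (- word_map ws \<alpha>)"
    using root_nonneg_comb_cases ws(3) by blast
  then obtain ws' where "set ws' \<subseteq> \<Delta>" "length ws' < length ws" "w \<circ> refl \<alpha> = word_map ws'"
    using word_map_comp_refl_shorter[OF ws(1) assms(2)] ws(3) by blast
  then have "weyl_length \<Delta> (w \<circ> refl \<alpha>) < weyl_length \<Delta> w"
    using weyl_length_le[of ws'] ws(2) by simp
  with assms(2,3) show False
    by (simp add: right_descents_def)
qed

lemma nonneg_comb_linear_image:
  assumes "linear f" "nonneg_comb v" "\<And>\<alpha>. \<alpha> \<in> \<Delta> \<Longrightarrow> coeff v \<alpha> \<noteq> 0 \<Longrightarrow> nonneg_comb (f \<alpha>)"
  shows "nonneg_comb (f v)"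
proof -
  have "f v = f (\<Sum>\<alpha>\<in>\<Delta>. coeff v \<alpha> *\<^sub>R \<alpha>)"
    by (simp add: sum_coeff)
  also have "\<dots> = (\<Sum>\<alpha>\<in>\<Delta>. coeff v \<alpha> *\<^sub>R f \<alpha>)"
    using assms(1) by (simp add: linear_sum linear_scale)
  also have "nonneg_comb \<dots>"
  proof (rule nonneg_comb_sum)
    fix \<alpha> assume "\<alpha> \<in> \<Delta>"
    then show "nonneg_comb (coeff v \<alpha> *\<^sub>R f \<alpha>)"
      using assms(2,3) by (cases "coeff v \<alpha> = 0") (auto simp: nonneg_comb_def coeff_scaleR representation_zero)
  qed
  finally show ?thesis .
qed

lemma coeff_M_set:
  assumes "highest_root \<Phi> \<Delta> \<theta>" "\<alpha>i \<in> \<Delta>" "coeff \<theta> \<alpha>i = 1" "\<gamma> \<in> M_set \<Phi> \<Delta> \<alpha>i"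
  shows "coeff \<gamma> \<alpha>i = 1"
proof -
  have "\<gamma> \<in> \<Phi>" "nonneg_comb (\<gamma> - \<alpha>i)"
    using assms(4) by (auto simp: M_set_def pos_roots_eq root_le_iff)
  moreover from \<open>\<gamma> \<in> \<Phi>\<close> have "nonneg_comb (\<theta> - \<gamma>)"
    using assms(1) by (simp add: highest_root_def root_le_iff)
  ultimately have "0 \<le> coeff (\<gamma> - \<alpha>i) \<alpha>i" "0 \<le> coeff (\<theta> - \<gamma>) \<alpha>i"
    using assms(2) unfolding nonneg_comb_def by blast+
  with assms(2,3) show ?thesis
    by (simp add: coeff_diff coeff_simple)
qed

end

theorem proposition5p5:
  fixes \<Phi> \<Delta> :: "'a::euclidean_space set" and \<theta> \<alpha>i \<gamma> \<gamma>' :: 'a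
    and m :: "'a \<Rightarrow> real" and w :: "'a \<Rightarrow> 'a"
  assumes "root_system \<Phi>" and "crystallographic \<Phi>" and "irreducible_rs \<Phi>"
    and "is_base \<Phi> \<Delta>"
    and "highest_root \<Phi> \<Delta> \<theta>"
    and "\<theta> = (\<Sum>\<alpha>\<in>\<Delta>. m \<alpha> *\<^sub>R \<alpha>)"
    and "\<alpha>i \<in> \<Delta>" and "m \<alpha>i = 1"
    and "w \<in> min_coset_reps \<Phi> \<Delta> \<alpha>i"
    and "\<gamma> \<in> M_set \<Phi> \<Delta> \<alpha>i" and "\<gamma>' \<in> M_set \<Phi> \<Delta> \<alpha>i"
    and "root_le \<Phi> \<Delta> \<gamma>' \<gamma>"
  shows "root_le \<Phi> \<Delta> (w \<gamma>') (w \<gamma>)"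
proof -
  interpret based_root_system \<Phi> \<Delta>
    using assms(1,4) by unfold_locales
  have w: "w \<in> weyl_group \<Phi>" "right_descents \<Delta> w \<subseteq> {\<alpha>i}"
    using assms(9) by (auto simp: min_coset_reps_def)
  then obtain ws where "w = word_map ws"
    using weyl_group_word by blast
  then have "linear w"
    using orthogonal_transformation_word_map orthogonal_transformation_linear by blast
  have "coeff \<theta> \<alpha>i = 1"
    using assms(6-8) by (simp add: coeff_lincomb)
  then have "coeff (\<gamma> - \<gamma>') \<alpha>i = 0"
    using coeff_M_set assms(5,7,10,11) by (simp add: coeff_diff)
  have "nonneg_comb (w (\<gamma> - \<gamma>'))"
  proof (rule nonneg_comb_linear_image[OF \<open>linear w\<close>])
    show "nonneg_comb (\<gamma> - \<gamma>')"
      using assms(12) by (simp add: root_le_iff)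
    fix \<alpha> assume "\<alpha> \<in> \<Delta>" "coeff (\<gamma> - \<gamma>') \<alpha> \<noteq> 0"
    with \<open>coeff (\<gamma> - \<gamma>') \<alpha>i = 0\<close> w(2) have "\<alpha> \<notin> right_descents \<Delta> w"
      by auto
    with w(1) \<open>\<alpha> \<in> \<Delta>\<close> show "nonneg_comb (w \<alpha>)"
      by (rule nonneg_comb_simple_not_right_descent)
  qed
  then show ?thesis
    using \<open>linear w\<close> by (simp add: root_le_iff linear_diff)
qed

end
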